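(* For all sufficiently large $n$, $$\tfrac12 \log_2 n \le h_3(n,\{(4,1),(4,3)\}) < 4(\log_2 n)^2.$$
   Context: For an $r$-uniform hypergraph ($r$-graph) $H$, a homogeneous set is a set of vertices that is either a clique (every $r$-subset is an edge) or a coclique (no $r$-subset is an edge); $h(H)$ denotes the size of a largest homogeneous set. An $(m,f)$-graph is an $r$-graph with $m$ vertices and $f$ edges; $H$ is $(m,f)$-free if it contains no induced sub-hypergraph that is an $(m,f)$-graph. For a set $Q$ of pairs $(m,f)$, $H$ is $Q$-free if it is $(m,f)$-free for every $(m,f)\in Q$. $h_r(n,Q)$ is the minimum of $h(H)$ over all $n$-vertex $Q$-free $r$-graphs $H$. *)

theory Defs
  imports Complex_Main
begin

definition uniform_hypergraph :: "nat \<Rightarrow> 'a set \<Rightarrow> 'a set set \<Rightarrow> bool" where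
  "uniform_hypergraph r V E \<longleftrightarrow> finite V \<and> (\<forall>e\<in>E. e \<subseteq> V \<and> card e = r)"

definition r_subsets :: "nat \<Rightarrow> 'a set \<Rightarrow> 'a set set" where
  "r_subsets r S = {e. e \<subseteq> S \<and> card e = r}"

definition homogeneous :: "nat \<Rightarrow> 'a set \<Rightarrow> 'a set set \<Rightarrow> 'a set \<Rightarrow> bool" where
  "homogeneous r V E S \<longleftrightarrow> S \<subseteq> V \<and>
     (r_subsets r S \<subseteq> E \<or> r_subsets r S \<inter> E = {})"

definition hom_number :: "nat \<Rightarrow> 'a set \<Rightarrow> 'a set set \<Rightarrow> nat" where
  "hom_number r V E = Max {card S | S. homogeneous r V E S}"

definition has_induced :: "nat \<Rightarrow> 'a set \<Rightarrow> 'a set set \<Rightarrow> nat \<times> nat \<Rightarrow> bool" where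
  "has_induced r V E mf \<longleftrightarrow>
     (\<exists>S. S \<subseteq> V \<and> card S = fst mf \<and> card {e \<in> E. e \<subseteq> S} = snd mf)"

definition Q_free :: "nat \<Rightarrow> 'a set \<Rightarrow> 'a set set \<Rightarrow> (nat \<times> nat) set \<Rightarrow> bool" where
  "Q_free r V E Q \<longleftrightarrow> (\<forall>mf\<in>Q. \<not> has_induced r V E mf)"

text \<open>h_r(n,Q): minimum of h(H) over all n-vertex Q-free r-graphs H.
  Up to isomorphism we may take the vertex set to be {0..<n}.\<close>
definition h_r :: "nat \<Rightarrow> nat \<Rightarrow> (nat \<times> nat) set \<Rightarrow> nat" where
  "h_r r n Q = Min {hom_number r {..<n} E | E.
       uniform_hypergraph r {..<n} E \<and> Q_free r {..<n} E Q}"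

end

theory Submission
  imports Defs "HOL-Library.Ramsey"
begin

text \<open>Lower bound: in a 3-graph without induced (4,1)- and (4,3)-subgraphs, a clique (independent set)
  of the link graph of a vertex v extends by v to a clique (coclique) of the 3-graph, since a
  triple inside it that is a non-edge (edge) would span, together with v, a 4-set with exactly 3 (1)
  edges. The Erdos--Szekeres bound in the link yields such a set of size about \<open>(log\<^sub>2 n)/2\<close>.

  Upper bound: the triples carrying an odd number of edges of a graph G form a 3-graph in which every
  4-set spans an even number of edges. If S is homogeneous there, then G restricted to S minus a
  vertex v is determined by the neighbourhood of v and one bit: it is a union of two cliques or a
  complete bipartite graph. Counting graphs on \<open>n \<le> 2\<^sup>L\<close> vertices with this property on some set
  of size 2L+6 shows that some G has no homogeneous set that large.\<close>

lemma homogeneous_card_le_hom_number: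
  assumes "finite V" and "homogeneous r V E S"
  shows "card S \<le> hom_number r V E"
proof -
  have "{card S | S. homogeneous r V E S} \<subseteq> {..card V}"
    using assms(1) by (auto simp: homogeneous_def intro: card_mono)
  then show ?thesis
    unfolding hom_number_def using assms(2) by (auto intro: Max_ge finite_subset)
qed

lemma hom_number_attained:
  assumes "finite V"
  obtains S where "homogeneous r V E S" and "card S = hom_number r V E"
proof -
  have "{card S | S. homogeneous r V E S} \<subseteq> {..card V}"
    using assms by (auto simp: homogeneous_def intro: card_mono)
  moreover have "homogeneous r V E {}"
    by (auto simp: homogeneous_def r_subsets_def)
  ultimately have "hom_number r V E \<in> {card S | S. homogeneous r V E S}"
    unfolding hom_number_def by (intro Max_in) (auto intro: finite_subset)
  then show ?thesis
    using that by auto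
qed

lemma homogeneous_subset:
  "homogeneous r V E S \<Longrightarrow> S' \<subseteq> S \<Longrightarrow> homogeneous r V E S'"
  unfolding homogeneous_def r_subsets_def by blast

lemma finite_admissible_hom_numbers:
  fixes n :: nat
  shows "finite {hom_number r {..<n} E | E. uniform_hypergraph r {..<n} E \<and> Q_free r {..<n} E Q}"
proof -
  have "{hom_number r {..<n} E | E. uniform_hypergraph r {..<n} E \<and> Q_free r {..<n} E Q}
        \<subseteq> hom_number r {..<n} ` Pow (Pow {..<n})"
    by (auto simp: uniform_hypergraph_def)
  then show ?thesis
    by (rule finite_subset) simp
qed

lemma h_r_le_hom_number:
  assumes "uniform_hypergraph r {..<n} E" and "Q_free r {..<n} E Q"
  shows "h_r r n Q \<le> hom_number r {..<n} E"
  unfolding h_r_def using assms finite_admissible_hom_numbers by (auto intro: Min_le)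

lemma h_r_attained:
  assumes "uniform_hypergraph r {..<n} E\<^sub>0" and "Q_free r {..<n} E\<^sub>0 Q"
  obtains E where "uniform_hypergraph r {..<n} E" and "Q_free r {..<n} E Q"
    and "h_r r n Q = hom_number r {..<n} E"
proof -
  have "h_r r n Q \<in> {hom_number r {..<n} E | E. uniform_hypergraph r {..<n} E \<and> Q_free r {..<n} E Q}"
    unfolding h_r_def using assms finite_admissible_hom_numbers by (intro Min_in) auto
  then show ?thesis
    using that by auto
qed

lemma r_subsets_3_iff:
  "t \<in> r_subsets 3 S \<longleftrightarrow> (\<exists>x y z. t = {x, y, z} \<and> distinct [x, y, z] \<and> x \<in> S \<and> y \<in> S \<and> z \<in> S)"
  by (auto simp: r_subsets_def card_3_iff)

lemma r_subsets_card_minus_one: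
  assumes "finite S" and "S \<noteq> {}"
  shows "r_subsets (card S - 1) S = (\<lambda>w. S - {w}) ` S"
proof (intro equalityI subsetI)
  fix t assume t: "t \<in> r_subsets (card S - 1) S"
  then have "t \<subseteq> S" and "card t = card S - 1"
    by (auto simp: r_subsets_def)
  moreover have "card S > 0"
    using assms by auto
  ultimately have "card (S - t) = 1"
    using assms(1) by (simp add: card_Diff_subset finite_subset)
  then obtain w where "S - t = {w}"
    by (meson card_1_singletonE)
  then show "t \<in> (\<lambda>w. S - {w}) ` S"
    using t by (auto simp: r_subsets_def)
next
  fix t assume "t \<in> (\<lambda>w. S - {w}) ` S"
  then show "t \<in> r_subsets (card S - 1) S"
    using assms(1) by (auto simp: r_subsets_def)
qed

lemma r_subsets_3_of_4:
  assumes "distinct [a, b, c, d]"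
  shows "r_subsets 3 {a, b, c, d} = {{a, b, c}, {a, b, d}, {a, c, d}, {b, c, d}}"
proof -
  have "r_subsets 3 {a, b, c, d} = (\<lambda>w. {a, b, c, d} - {w}) ` {a, b, c, d}"
    using r_subsets_card_minus_one[of "{a, b, c, d}"] assms by (simp add: numeral_3_eq_3)
  also have "\<dots> = {{b, c, d}, {a, c, d}, {a, b, d}, {a, b, c}}"
    using assms by auto
  finally show ?thesis
    by (simp add: insert_commute)
qed
lemma r_subsets_2_of_3:
  assumes "distinct [a, b, c]"
  shows "r_subsets 2 {a, b, c} = {{a, b}, {a, c}, {b, c}}"
proof -
  have "r_subsets 2 {a, b, c} = (\<lambda>w. {a, b, c} - {w}) ` {a, b, c}"
    using r_subsets_card_minus_one[of "{a, b, c}"] assms by (simp add: numeral_2_eq_2)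
  also have "\<dots> = {{b, c}, {a, c}, {a, b}}"
    using assms by auto
  finally show ?thesis
    by (simp add: insert_commute)
qed

lemma edges_within_eq:
  assumes "\<forall>e\<in>E. card e = r"
  shows "{e \<in> E. e \<subseteq> S} = r_subsets r S \<inter> E"
  using assms by (auto simp: r_subsets_def)

lemma card_edges_within_4:
  assumes "uniform_hypergraph 3 V E" and "distinct [a, b, c, d]"
  shows "card {e \<in> E. e \<subseteq> {a, b, c, d}} =
           length (filter (\<lambda>t. t \<in> E) [{a, b, c}, {a, b, d}, {a, c, d}, {b, c, d}])"
    (is "_ = length (filter _ ?L)")
proof -
  have card_3: "\<forall>e\<in>E. card e = 3"
    using assms(1) by (simp add: uniform_hypergraph_def)
  have "distinct ?L"
    using assms(2) by (auto simp: doubleton_eq_iff insert_eq_iff)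
  moreover have "{e \<in> E. e \<subseteq> {a, b, c, d}} = set (filter (\<lambda>t. t \<in> E) ?L)"
    unfolding edges_within_eq[OF card_3] r_subsets_3_of_4[OF assms(2)] by auto
  ultimately show ?thesis
    by (simp add: distinct_card)
qed

lemma has_induced_4I:
  assumes "uniform_hypergraph 3 V E" and "distinct [a, b, c, d]" and "{a, b, c, d} \<subseteq> V"
  shows "has_induced 3 V E (4, length (filter (\<lambda>t. t \<in> E) [{a, b, c}, {a, b, d}, {a, c, d}, {b, c, d}]))"
  unfolding has_induced_def using assms card_edges_within_4[OF assms(1,2)]
  by (intro exI[of _ "{a, b, c, d}"]) simp

section \<open>Lower bound\<close>

lemma ramsey_two_colours:
  assumes "finite V" and "(k + l) choose k \<le> card V"
  shows "\<exists>R\<subseteq>V. card R = k \<and> clique R G \<or> card R = l \<and> indep R G"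
proof -
  obtain N where N: "partn_lst {..<N} [k, l] 2" and "N \<le> card V"
    using ramsey2_full[of 2 k l] assms(2) by (simp add: ES2_choose)
  then obtain v where v: "inj_on v {..<N}" "v ` {..<N} \<subseteq> V"
    using assms(1) by (metis card_le_inj card_lessThan finite_lessThan)
  define f where "f e = (if v ` e \<in> G then 0 else Suc 0)" for e
  have "f \<in> nsets {..<N} 2 \<rightarrow> {..<Suc (Suc 0)}"
    by (simp add: f_def)
  then obtain i U where i: "i < 2" and fU: "f ` nsets U 2 \<subseteq> {i}"
    and U: "U \<in> nsets {..<N} ([k, l] ! i)"
    using N numeral_2_eq_2 by (auto simp: partn_lst_def monochromatic_def)
  have "U \<subseteq> {..<N}"
    using U by (simp add: nsets_def)
  then have card_vU: "card (v ` U) = card U"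
    by (intro card_image inj_on_subset[OF v(1)])
  have colour: "({v x, v y} \<in> G) = (i = 0)" if "x \<in> U" "y \<in> U" "x \<noteq> y" for x y
  proof -
    have "{x, y} \<in> nsets U 2"
      using that by simp
    then have "f {x, y} = i"
      using fU by blast
    then show ?thesis
      using i by (auto simp: f_def split: if_splits)
  qed
  have "v ` U \<subseteq> V"
    using U v by (auto simp: nsets_def)
  moreover have "card (v ` U) = k \<and> clique (v ` U) G \<or> card (v ` U) = l \<and> indep (v ` U) G"
  proof (cases "i = 0")
    case True
    then show ?thesis
      using U colour card_vU unfolding clique_def nsets_def by auto
  next
    case False
    then have "i = 1" using i by simp
    then show ?thesis
      using U colour card_vU unfolding indep_def nsets_def by auto
  qed
  ultimately show ?thesis by blast
qed

lemma r_subsets_3_insertE: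
  assumes "t \<in> r_subsets 3 (insert v R)" and "v \<notin> R"
  obtains x y where "x \<in> R" "y \<in> R" "x \<noteq> y" "t = {v, x, y}"
    | x y z where "distinct [x, y, z]" "x \<in> R" "y \<in> R" "z \<in> R" "t = {x, y, z}"
proof -
  obtain x y z where t: "t = {x, y, z}" "distinct [x, y, z]" "x \<in> insert v R" "y \<in> insert v R" "z \<in> insert v R"
    using assms(1) unfolding r_subsets_3_iff by blast
  consider "v = x" | "v = y" | "v = z" | "v \<notin> {x, y, z}"
    by blast
  then show thesis
  proof cases
    case 1
    then show thesis using that(1)[of y z] t assms(2) by auto
  next
    case 2
    then show thesis using that(1)[of x z] t assms(2) by auto
  next
    case 3
    then show thesis using that(1)[of x y] t assms(2) by auto
  next
    case 4
    then show thesis using that(2)[of x y z] t by auto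
  qed
qed

definition link :: "'a \<Rightarrow> 'a set set \<Rightarrow> 'a set set" where
  "link v E = {p. insert v p \<in> E}"

lemma clique_link_imp_clique:
  assumes E: "uniform_hypergraph 3 V E" and no43: "\<not> has_induced 3 V E (4, 3)"
    and "v \<in> V" and R: "R \<subseteq> V - {v}" and clique: "clique R (link v E)"
  shows "r_subsets 3 (insert v R) \<subseteq> E"
proof
  fix t assume t: "t \<in> r_subsets 3 (insert v R)"
  have "v \<notin> R" using R by blast
  with t show "t \<in> E"
  proof (cases rule: r_subsets_3_insertE)
    case (1 x y)
    then show ?thesis using clique by (auto simp: clique_def link_def)
  next
    case (2 x y z)
    show ?thesis
    proof (rule ccontr)
      assume "t \<notin> E"
      have "{v, x, y} \<in> E" "{v, x, z} \<in> E" "{v, y, z} \<in> E"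
        using clique 2 by (auto simp: clique_def link_def)
      moreover have "distinct [v, x, y, z]" and "{v, x, y, z} \<subseteq> V"
        using 2 R \<open>v \<in> V\<close> by auto
      ultimately have "has_induced 3 V E (4, 3)"
        using has_induced_4I[OF E, of v x y z] \<open>t \<notin> E\<close> \<open>t = {x, y, z}\<close>
        by (simp add: numeral_3_eq_3)
      then show False using no43 by contradiction
    qed
  qed
qed

lemma indep_link_imp_coclique:
  assumes E: "uniform_hypergraph 3 V E" and no41: "\<not> has_induced 3 V E (4, 1)"
    and "v \<in> V" and R: "R \<subseteq> V - {v}" and indep: "indep R (link v E)"
  shows "r_subsets 3 (insert v R) \<inter> E = {}"
proof -
  have "t \<notin> E" if t: "t \<in> r_subsets 3 (insert v R)" for t
  proof -
    have "v \<notin> R" using R by blast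
    with t show "t \<notin> E"
    proof (cases rule: r_subsets_3_insertE)
      case (1 x y)
      then show ?thesis using indep by (auto simp: indep_def link_def)
    next
      case (2 x y z)
      show ?thesis
      proof
        assume "t \<in> E"
        have "{v, x, y} \<notin> E" "{v, x, z} \<notin> E" "{v, y, z} \<notin> E"
          using indep 2 by (auto simp: indep_def link_def)
        moreover have "distinct [v, x, y, z]" and "{v, x, y, z} \<subseteq> V"
          using 2 R \<open>v \<in> V\<close> by auto
        ultimately have "has_induced 3 V E (4, 1)"
          using has_induced_4I[OF E, of v x y z] \<open>t \<in> E\<close> \<open>t = {x, y, z}\<close> by simp
        then show False using no41 by contradiction
      qed
    qed
  qed
  then show ?thesis by blast
qed

lemma h_r_lower_bound:
  fixes n k :: nat
  assumes "4 ^ k < n"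
  shows "k + 1 \<le> h_r 3 n {(4, 1), (4, 3)}"
proof -
  have "uniform_hypergraph 3 {..<n} {}" and "Q_free 3 {..<n} {} {(4, 1), (4, 3)}"
    by (auto simp: uniform_hypergraph_def Q_free_def has_induced_def)
  then obtain E where E: "uniform_hypergraph 3 {..<n} E"
    and free: "Q_free 3 {..<n} E {(4, 1), (4, 3)}"
    and h: "h_r 3 n {(4, 1), (4, 3)} = hom_number 3 {..<n} E"
    by (rule h_r_attained)
  have no41: "\<not> has_induced 3 {..<n} E (4, 1)" and no43: "\<not> has_induced 3 {..<n} E (4, 3)"
    using free by (auto simp: Q_free_def)
  have "(k + k) choose k \<le> 4 ^ k"
    using binomial_le_pow2[of "k + k" k] by (simp add: mult_2[symmetric] power_mult)
  also have "\<dots> \<le> card ({..<n} - {0})"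
    using assms by simp
  finally obtain R where R: "R \<subseteq> {..<n} - {0}"
    and "card R = k \<and> clique R (link 0 E) \<or> card R = k \<and> indep R (link 0 E)"
    using ramsey_two_colours[of "{..<n} - {0}" k k] by blast
  moreover have "(0::nat) \<in> {..<n}"
    using assms by (simp add: order_le_less_trans)
  ultimately have "homogeneous 3 {..<n} E (insert 0 R)" and "card R = k"
    using clique_link_imp_clique[OF E no43, of 0 R] indep_link_imp_coclique[OF E no41, of 0 R]
    by (auto simp: homogeneous_def)
  moreover have "card (insert 0 R) = card R + 1"
  proof -
    have "finite R" and "0 \<notin> R"
      using R by (auto intro: finite_subset)
    then show ?thesis by simp
  qed
  ultimately show ?thesis
    unfolding h using homogeneous_card_le_hom_number[of "{..<n}"] by fastforce
qed

section \<open>Parity hypergraphs\<close>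

definition parity_hypergraph :: "'a set \<Rightarrow> 'a set set \<Rightarrow> 'a set set" where
  "parity_hypergraph V G = {t \<in> r_subsets 3 V. odd (card {p \<in> G. p \<subseteq> t})}"

lemma uniform_parity_hypergraph:
  "finite V \<Longrightarrow> uniform_hypergraph 3 V (parity_hypergraph V G)"
  by (auto simp: uniform_hypergraph_def parity_hypergraph_def r_subsets_def)

lemma odd_length_filter_3:
  "odd (length (filter P [x, y, z])) \<longleftrightarrow> (P x \<noteq> (P y \<noteq> P z))"
  by (cases "P x"; cases "P y"; cases "P z") auto

lemma mem_parity_hypergraph:
  assumes G: "G \<subseteq> r_subsets 2 V" and abc: "distinct [a, b, c]" "{a, b, c} \<subseteq> V"
  shows "{a, b, c} \<in> parity_hypergraph V G \<longleftrightarrow> ({a, b} \<in> G) \<noteq> (({a, c} \<in> G) \<noteq> ({b, c} \<in> G))"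
proof -
  let ?L = "[{a, b}, {a, c}, {b, c}]"
  have card_2: "\<forall>p\<in>G. card p = 2"
    using G by (auto simp: r_subsets_def)
  have "distinct ?L"
    using abc(1) by (auto simp: doubleton_eq_iff)
  moreover have "{p \<in> G. p \<subseteq> {a, b, c}} = set (filter (\<lambda>p. p \<in> G) ?L)"
    unfolding edges_within_eq[OF card_2] r_subsets_2_of_3[OF abc(1)] by auto
  ultimately have "card {p \<in> G. p \<subseteq> {a, b, c}} = length (filter (\<lambda>p. p \<in> G) ?L)"
    by (simp add: distinct_card)
  moreover have "{a, b, c} \<in> r_subsets 3 V"
    using abc by (simp add: r_subsets_def)
  ultimately have "{a, b, c} \<in> parity_hypergraph V G \<longleftrightarrow> odd (length (filter (\<lambda>p. p \<in> G) ?L))"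
    by (simp add: parity_hypergraph_def)
  then show ?thesis
    unfolding odd_length_filter_3 .
qed

lemma card_4E:
  assumes "card F = 4"
  obtains a b c d where "F = {a, b, c, d}" and "distinct [a, b, c, d]"
proof -
  obtain a B where B: "F = insert a B" "a \<notin> B" "card B = 3"
    using assms card_Suc_eq[of F 3] by auto
  then obtain b c d where "B = {b, c, d}" "b \<noteq> c" "c \<noteq> d" "b \<noteq> d"
    unfolding card_3_iff by blast
  then show thesis
    using B that by auto
qed

lemma even_length_filter_4:
  "even (length (filter P [w, x, y, z])) \<longleftrightarrow> (P w \<longleftrightarrow> (P x \<longleftrightarrow> (P y \<longleftrightarrow> P z)))"
  by (cases "P w"; cases "P x"; cases "P y"; cases "P z") auto

text \<open>Every pair of a 4-set lies in exactly two of its triples, so the parities of the four triples cancel.\<close>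
lemma even_card_parity_edges_within_4:
  assumes G: "G \<subseteq> r_subsets 2 V" and "finite V" and F: "F \<subseteq> V" "card F = 4"
  shows "even (card {t \<in> parity_hypergraph V G. t \<subseteq> F})"
proof -
  obtain a b c d where F_eq: "F = {a, b, c, d}" and abcd: "distinct [a, b, c, d]"
    using F(2) by (rule card_4E)
  have sub: "{a, b, c} \<subseteq> V" "{a, b, d} \<subseteq> V" "{a, c, d} \<subseteq> V" "{b, c, d} \<subseteq> V"
    using F F_eq by auto
  have "distinct [a, b, c]" "distinct [a, b, d]" "distinct [a, c, d]" "distinct [b, c, d]"
    using abcd by auto
  note mem = mem_parity_hypergraph[OF G this(1) sub(1)] mem_parity_hypergraph[OF G this(2) sub(2)]
    mem_parity_hypergraph[OF G this(3) sub(3)] mem_parity_hypergraph[OF G this(4) sub(4)]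
  show ?thesis
    unfolding F_eq card_edges_within_4[OF uniform_parity_hypergraph[OF \<open>finite V\<close>] abcd]
      even_length_filter_4 mem
    by (cases "{a, b} \<in> G"; cases "{a, c} \<in> G"; cases "{b, c} \<in> G";
        cases "{a, d} \<in> G"; cases "{b, d} \<in> G"; cases "{c, d} \<in> G") simp_all
qed

lemma Q_free_parity_hypergraph:
  assumes "G \<subseteq> r_subsets 2 V" and "finite V"
  shows "Q_free 3 V (parity_hypergraph V G) {(4, 1), (4, 3)}"
proof -
  have "\<not> has_induced 3 V (parity_hypergraph V G) (4, f)" if "odd f" for f
    using even_card_parity_edges_within_4[OF assms] that unfolding has_induced_def by auto
  then show ?thesis
    unfolding Q_free_def by auto
qed

text \<open>For \<open>c\<close> the disjoint union of the cliques on \<open>S \<inter> T\<close> and \<open>S - T\<close>,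
  otherwise the complete bipartite graph between them.\<close>
definition bipartition_graph :: "'a set \<Rightarrow> 'a set \<Rightarrow> bool \<Rightarrow> 'a set set" where
  "bipartition_graph S T c = {{x, y} | x y. x \<in> S \<and> y \<in> S \<and> x \<noteq> y \<and> ((x \<in> T) = (y \<in> T)) = c}"

lemma homogeneous_parity_hypergraph_imp_bipartition:
  assumes G: "G \<subseteq> r_subsets 2 V" and hom: "homogeneous 3 V (parity_hypergraph V G) S" and "v \<in> S"
  shows "\<exists>T\<subseteq>S. \<exists>c. G \<inter> r_subsets 2 (S - {v}) = bipartition_graph (S - {v}) T c"
proof -
  define c where "c = (r_subsets 3 S \<subseteq> parity_hypergraph V G)"
  define T where "T = {x \<in> S. {v, x} \<in> G}"
  have edge_iff: "{x, y} \<in> G \<longleftrightarrow> ((x \<in> T) = (y \<in> T)) = c"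
    if "x \<in> S - {v}" "y \<in> S - {v}" "x \<noteq> y" for x y
  proof -
    have "{v, x, y} \<in> r_subsets 3 S" and "distinct [v, x, y]" and "{v, x, y} \<subseteq> V"
      using that \<open>v \<in> S\<close> hom by (auto simp: r_subsets_def homogeneous_def)
    moreover have "{v, x, y} \<in> parity_hypergraph V G \<longleftrightarrow> c"
      using hom \<open>{v, x, y} \<in> r_subsets 3 S\<close> unfolding c_def homogeneous_def by blast
    ultimately show ?thesis
      using mem_parity_hypergraph[OF G] that by (auto simp: T_def)
  qed
  have "G \<inter> r_subsets 2 (S - {v}) = bipartition_graph (S - {v}) T c"
  proof (intro equalityI subsetI)
    fix p assume "p \<in> G \<inter> r_subsets 2 (S - {v})"
    then obtain x y where "p = {x, y}" "x \<noteq> y" "x \<in> S - {v}" "y \<in> S - {v}" "p \<in> G"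
      by (auto simp: r_subsets_def card_2_iff)
    then show "p \<in> bipartition_graph (S - {v}) T c"
      using edge_iff unfolding bipartition_graph_def by blast
  next
    fix p assume "p \<in> bipartition_graph (S - {v}) T c"
    then obtain x y where "p = {x, y}" "x \<noteq> y" "x \<in> S - {v}" "y \<in> S - {v}"
      and "((x \<in> T) = (y \<in> T)) = c"
      unfolding bipartition_graph_def by blast
    then show "p \<in> G \<inter> r_subsets 2 (S - {v})"
      using edge_iff by (auto simp: r_subsets_def)
  qed
  moreover have "T \<subseteq> S"
    by (auto simp: T_def)
  ultimately show ?thesis by blast
qed

lemma card_Pow_fixed_trace:
  assumes "finite A" and "P \<subseteq> A"
  shows "card {G \<in> Pow A. G \<inter> P = X} * 2 ^ card P \<le> 2 ^ card A"
proof -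
  have "inj_on (\<lambda>G. G - P) {G \<in> Pow A. G \<inter> P = X}"
    by (rule inj_onI) blast
  then have "card {G \<in> Pow A. G \<inter> P = X} \<le> card (Pow (A - P))"
    using assms(1) by (intro card_inj_on_le) auto
  also have "\<dots> = 2 ^ (card A - card P)"
    using assms by (simp add: card_Pow card_Diff_subset finite_subset)
  finally have "card {G \<in> Pow A. G \<inter> P = X} * 2 ^ card P \<le> 2 ^ (card A - card P) * 2 ^ card P"
    by simp
  also have "\<dots> = 2 ^ card A"
    using assms by (simp add: card_mono flip: power_add)
  finally show ?thesis .
qed

lemma card_UN_mult_le:
  assumes "finite I" and "\<And>i. i \<in> I \<Longrightarrow> card (B i) * c \<le> b"
  shows "card (\<Union>i\<in>I. B i) * c \<le> card I * b"
proof -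
  have "card (\<Union>i\<in>I. B i) * c \<le> (\<Sum>i\<in>I. card (B i)) * c"
    using card_UN_le[OF assms(1)] by (rule mult_right_mono) simp
  also have "\<dots> = (\<Sum>i\<in>I. card (B i) * c)"
    by (rule sum_distrib_right)
  also have "\<dots> \<le> card I * b"
    using sum_bounded_above[of I "\<lambda>i. card (B i) * c" b] assms(2) by simp
  finally show ?thesis .
qed

lemma card_graphs_bipartition_below_Min:
  fixes S V :: "'a::linorder set"
  assumes "finite V" and "S \<subseteq> V" and "S \<noteq> {}"
  shows "card {G \<in> Pow (r_subsets 2 V). \<exists>T\<in>Pow S. \<exists>c.
             G \<inter> r_subsets 2 (S - {Min S}) = bipartition_graph (S - {Min S}) T c}
           * 2 ^ ((card S - 1) choose 2)
         \<le> 2 ^ card S * (2 * 2 ^ card (r_subsets 2 V))"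
proof -
  let ?A = "r_subsets 2 V" and ?P = "r_subsets 2 (S - {Min S})"
  have "finite S"
    using assms(1,2) by (rule finite_subset[rotated])
  have fin_A: "finite ?A"
    using assms(1) by (auto simp: r_subsets_def)
  have "?P \<subseteq> ?A"
    using assms(2) by (auto simp: r_subsets_def)
  have "card ?P = (card S - 1) choose 2"
    using \<open>finite S\<close> assms(3) by (simp add: r_subsets_def n_subsets)
  then have trace: "card {G \<in> Pow ?A. G \<inter> ?P = bipartition_graph (S - {Min S}) T c}
      * 2 ^ ((card S - 1) choose 2) \<le> 2 ^ card ?A" for T c
    using card_Pow_fixed_trace[OF fin_A \<open>?P \<subseteq> ?A\<close>] by simp
  have "{G \<in> Pow ?A. \<exists>T\<in>Pow S. \<exists>c. G \<inter> ?P = bipartition_graph (S - {Min S}) T c}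
      = (\<Union>T\<in>Pow S. \<Union>c\<in>UNIV. {G \<in> Pow ?A. G \<inter> ?P = bipartition_graph (S - {Min S}) T c})"
    by blast
  also have "card \<dots> * 2 ^ ((card S - 1) choose 2) \<le> card (Pow S) * (2 * 2 ^ card ?A)"
  proof (rule card_UN_mult_le)
    fix T
    show "card (\<Union>c\<in>UNIV. {G \<in> Pow ?A. G \<inter> ?P = bipartition_graph (S - {Min S}) T c})
        * 2 ^ ((card S - 1) choose 2) \<le> 2 * 2 ^ card ?A"
      using card_UN_mult_le[of UNIV "\<lambda>c. {G \<in> Pow ?A. G \<inter> ?P = bipartition_graph (S - {Min S}) T c}",
          OF _ trace] by simp
  qed (use \<open>finite S\<close> in simp)
  finally show ?thesis
    using \<open>finite S\<close> by (simp add: card_Pow)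
qed

lemma large_homogeneous_imp_bipartition_below_Min:
  fixes V :: "'a::linorder set"
  assumes "finite V" and G: "G \<subseteq> r_subsets 2 V" and "K \<noteq> 0"
    and K: "K \<le> hom_number 3 V (parity_hypergraph V G)"
  shows "\<exists>S\<in>r_subsets K V. \<exists>T\<in>Pow S. \<exists>c.
           G \<inter> r_subsets 2 (S - {Min S}) = bipartition_graph (S - {Min S}) T c"
proof -
  obtain S where S: "homogeneous 3 V (parity_hypergraph V G) S" and "K \<le> card S"
    using hom_number_attained[OF \<open>finite V\<close>] K by metis
  then obtain S\<^sub>0 where "S\<^sub>0 \<subseteq> S" and "card S\<^sub>0 = K"
    by (meson obtain_subset_with_card_n)
  then have hom: "homogeneous 3 V (parity_hypergraph V G) S\<^sub>0"
    using homogeneous_subset[OF S] by blast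
  then have S\<^sub>0: "S\<^sub>0 \<in> r_subsets K V"
    using \<open>card S\<^sub>0 = K\<close> by (auto simp: homogeneous_def r_subsets_def)
  have "Min S\<^sub>0 \<in> S\<^sub>0"
    using \<open>card S\<^sub>0 = K\<close> \<open>K \<noteq> 0\<close> by (intro Min_in) (auto intro: card_ge_0_finite)
  then show ?thesis
    using homogeneous_parity_hypergraph_imp_bipartition[OF G hom] S\<^sub>0 by blast
qed

lemma exists_graph_parity_hom_number_less:
  fixes n K :: nat
  assumes count: "(n choose K) * 2 ^ (K + 1) < 2 ^ ((K - 1) choose 2)"
  shows "\<exists>G \<subseteq> r_subsets 2 {..<n}. hom_number 3 {..<n} (parity_hypergraph {..<n} G) < K"
proof -
  let ?A = "r_subsets 2 {..<n}"
  define Traced where "Traced S = {G \<in> Pow ?A. \<exists>T\<in>Pow S. \<exists>c.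
      G \<inter> r_subsets 2 (S - {Min S}) = bipartition_graph (S - {Min S}) T c}" for S
  define U where "U = (\<Union>S\<in>r_subsets K {..<n}. Traced S)"
  have "K \<noteq> 0"
    using count by (cases "K = 0") (auto simp: numeral_2_eq_2)
  have fin_A: "finite ?A"
    by (auto simp: r_subsets_def)
  have "card U * 2 ^ ((K - 1) choose 2) \<le> card (r_subsets K {..<n}) * (2 ^ K * (2 * 2 ^ card ?A))"
    unfolding U_def
  proof (rule card_UN_mult_le)
    fix S assume "S \<in> r_subsets K {..<n}"
    then have "S \<subseteq> {..<n}" and "card S = K" and "S \<noteq> {}"
      using \<open>K \<noteq> 0\<close> by (auto simp: r_subsets_def)
    then show "card (Traced S) * 2 ^ ((K - 1) choose 2) \<le> 2 ^ K * (2 * 2 ^ card ?A)"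
      unfolding Traced_def using card_graphs_bipartition_below_Min[of "{..<n}" S] by simp
  qed (auto simp: r_subsets_def)
  also have "\<dots> = (n choose K) * 2 ^ (K + 1) * 2 ^ card ?A"
    by (simp add: r_subsets_def n_subsets)
  also have "\<dots> < 2 ^ ((K - 1) choose 2) * 2 ^ card ?A"
    using count by simp
  finally have "card U < card (Pow ?A)"
    using fin_A by (simp add: card_Pow)
  moreover have "U \<subseteq> Pow ?A"
    by (auto simp: U_def Traced_def)
  ultimately have "\<not> Pow ?A \<subseteq> U"
    using fin_A by (metis card_mono finite_Pow_iff finite_subset not_le)
  then obtain G where G: "G \<subseteq> ?A" "G \<notin> U"
    by blast
  then have "\<not> K \<le> hom_number 3 {..<n} (parity_hypergraph {..<n} G)"
    using large_homogeneous_imp_bipartition_below_Min[of "{..<n}" G K] \<open>K \<noteq> 0\<close>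
    unfolding U_def Traced_def by blast
  with G(1) show ?thesis
    by (auto simp: not_le)
qed

section \<open>Upper bound and the theorem\<close>

lemma binomial_pow_less_pow_choose:
  fixes n L :: nat
  assumes "n \<le> 2 ^ L"
  shows "(n choose (2 * L + 6)) * 2 ^ (2 * L + 7) < 2 ^ ((2 * L + 5) choose 2)"
proof -
  have "n choose (2 * L + 6) \<le> n ^ (2 * L + 6)"
    by (cases "2 * L + 6 \<le> n") (simp_all add: binomial_le_pow binomial_eq_0)
  also have "\<dots> \<le> (2 ^ L) ^ (2 * L + 6)"
    using assms by (rule power_mono) simp
  finally have "(n choose (2 * L + 6)) * 2 ^ (2 * L + 7) \<le> 2 ^ (L * (2 * L + 6) + (2 * L + 7))"
    by (simp add: power_add power_mult)
  also have "\<dots> < 2 ^ ((2 * L + 5) * (L + 2))"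
    by (rule power_strict_increasing) (simp_all add: algebra_simps)
  also have "(2 * L + 5) * (L + 2) = (2 * L + 5) choose 2"
    by (simp add: choose_two algebra_simps)
  finally show ?thesis .
qed

lemma h_r_upper_bound:
  fixes n L :: nat
  assumes "n \<le> 2 ^ L"
  shows "h_r 3 n {(4, 1), (4, 3)} \<le> 2 * L + 5"
proof -
  have "(n choose (2 * L + 6)) * 2 ^ (2 * L + 6 + 1) < 2 ^ ((2 * L + 6 - 1) choose 2)"
    using binomial_pow_less_pow_choose[OF assms] by (simp add: numeral_eq_Suc)
  then obtain G where G: "G \<subseteq> r_subsets 2 {..<n}"
    and hom: "hom_number 3 {..<n} (parity_hypergraph {..<n} G) < 2 * L + 6"
    using exists_graph_parity_hom_number_less by blast
  have "h_r 3 n {(4, 1), (4, 3)} \<le> hom_number 3 {..<n} (parity_hypergraph {..<n} G)"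
    using uniform_parity_hypergraph Q_free_parity_hypergraph[OF G] by (intro h_r_le_hom_number) auto
  with hom show ?thesis by simp
qed

lemma half_log_le_h_r:
  fixes n :: nat
  assumes "2 \<le> n"
  shows "(1/2) * log 2 (real n) \<le> real (h_r 3 n {(4, 1), (4, 3)})"
proof -
  define x where "x = log 2 (real n)"
  have "1 \<le> x"
    using assms by (simp add: x_def)
  define k where "k = nat (\<lceil>x / 2\<rceil> - 1)"
  have "1 \<le> \<lceil>x / 2\<rceil>"
    using \<open>1 \<le> x\<close> by (simp add: le_ceiling_iff)
  then have k: "real k = real_of_int \<lceil>x / 2\<rceil> - 1"
    by (simp add: k_def)
  have "real (4 ^ k) = 2 powr (2 * real k)"
    by (simp add: powr_realpow power_mult flip: powr_powr)
  also have "\<dots> < 2 powr x"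
    using k by (simp add: ceiling_less_iff) linarith
  also have "\<dots> = real n"
    using assms by (simp add: x_def)
  finally have "k + 1 \<le> h_r 3 n {(4, 1), (4, 3)}"
    by (intro h_r_lower_bound) simp
  moreover have "x / 2 \<le> real k + 1"
    using k by linarith
  ultimately show ?thesis
    unfolding x_def by simp
qed

lemma h_r_less_four_log_squared:
  fixes n :: nat
  assumes "4 \<le> n"
  shows "real (h_r 3 n {(4, 1), (4, 3)}) < 4 * (log 2 (real n))^2"
proof -
  define x where "x = log 2 (real n)"
  have "2 \<le> x"
    using assms by (simp add: x_def le_log_iff)
  define L where "L = nat \<lceil>x\<rceil>"
  have L: "real L = real_of_int \<lceil>x\<rceil>"
    using \<open>2 \<le> x\<close> by (simp add: L_def)
  have "real n = 2 powr x"
    using assms by (simp add: x_def)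
  also have "\<dots> \<le> 2 powr real L"
    using L by simp
  finally have "n \<le> 2 ^ L"
    by (simp add: powr_realpow flip: of_nat_le_iff)
  then have "real (h_r 3 n {(4, 1), (4, 3)}) \<le> real (2 * L + 5)"
    by (intro of_nat_mono h_r_upper_bound)
  also have "\<dots> = 2 * real L + 5"
    by simp
  also have "\<dots> < 2 * x + 7"
    using L by linarith
  also have "\<dots> \<le> 4 * x^2"
  proof -
    have "2 * x \<le> x * x"
      using \<open>2 \<le> x\<close> by (intro mult_right_mono) auto
    then show ?thesis
      unfolding power2_eq_square using \<open>2 \<le> x\<close> by linarith
  qed
  finally show ?thesis
    unfolding x_def .
qed

theorem mainTheorem7:
  shows "\<forall>\<^sub>F n in sequentially.
           (1/2) * log 2 (real n) \<le> real (h_r 3 n {(4,1),(4,3)}) \<and>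
           real (h_r 3 n {(4,1),(4,3)}) < 4 * (log 2 (real n))^2"
  unfolding eventually_sequentially
  using half_log_le_h_r h_r_less_four_log_squared by (intro exI[of _ 4]) auto

end
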